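(* Let $\phi_1,\ldots,\phi_n\vdash\psi_0$ be a sequent of $NOM$. Suppose that for every orthomodular lattice $\mathcal Q$ and every function $[\![\cdot]\!]:\Phi\to\mathcal Q$ satisfying $[\![\phi\wedge\psi]\!]=[\![\phi]\!]\wedge[\![\psi]\!]$, $[\![\phi\rightarrow\psi]\!]=[\![\phi]\!]\rightarrow[\![\psi]\!]$, and $[\![\neg\phi]\!]=\neg[\![\phi]\!]$ for all formulas $\phi,\psi$, we have $[\![\phi_1]\!]\mathbin{\&}\cdots\mathbin{\&}[\![\phi_n]\!]\le[\![\psi_0]\!]$. Then $\phi_1,\ldots,\phi_n\vdash\psi_0$ is derivable in $NOM$.
   Context: $\Phi$ is the set of formulas of the propositional deductive system $NOM$: formulas are built from propositional letters using $\wedge$, $\rightarrow$, $\neg$. Sequents are $\phi_1,\ldots,\phi_n\vdash\psi$ ($n\ge0$) with antecedent a finite ordered sequence. With $\Gamma$ a finite possibly empty sequence of formulas and $\phi,\psi,\chi$ formulas, the rules of $NOM$ are: (assumption) $\Gamma,\phi\vdash\phi$; (cut) $\Gamma\vdash\phi$, $\Gamma,\phi\vdash\psi$ $\Rightarrow$ $\Gamma\vdash\psi$; (paste) $\Gamma\vdash\phi$, $\Gamma\vdash\psi$ $\Rightarrow$ $\Gamma,\phi\vdash\psi$; (compatible exchange) $\Gamma,\phi,\psi\vdash\phi$, $\Gamma,\phi,\psi\vdash\chi$, $\Gamma,\psi,\phi\vdash\psi$ $\Rightarrow$ $\Gamma,\psi,\phi\vdash\chi$; ($\wedge$-intro) $\Gamma\vdash\phi$,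 $\Gamma\vdash\psi$ $\Rightarrow$ $\Gamma\vdash\phi\wedge\psi$; ($\wedge$-elim) $\Gamma\vdash\phi\wedge\psi$ $\Rightarrow$ $\Gamma\vdash\phi$ and $\Rightarrow$ $\Gamma\vdash\psi$; ($\rightarrow$-intro) $\Gamma,\phi\vdash\psi$ $\Rightarrow$ $\Gamma\vdash\phi\rightarrow\psi$; ($\rightarrow$-elim) $\Gamma\vdash\phi\rightarrow\psi$ $\Rightarrow$ $\Gamma,\phi\vdash\psi$; (excluded middle) $\Gamma,\phi\vdash\psi$, $\Gamma,\neg\phi\vdash\psi$ $\Rightarrow$ $\Gamma\vdash\psi$; (explosion) $\Gamma\vdash\neg\phi$ $\Rightarrow$ $\Gamma,\phi\vdash\psi$. An orthomodular lattice is a bounded lattice with an order-reversing involution $\neg$ satisfying $a\wedge\neg a=\bot$, $a\vee\neg a=\top$, and $a\le b\Rightarrow a\vee(\neg a\wedge b)=b$. In it, $a\mathbin{\&}b=(a\vee\neg b)\wedge b$ and $a\rightarrow b=\neg a\vee(a\wedge b)$; $\&$ associates to the left and $a_1\mathbin{\&}\cdots\mathbin{\&}a_n=\top$ when $n=0$. *)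

theory Defs
  imports Main
begin

datatype 'v form = Var 'v | And "'v form" "'v form" | Imp "'v form" "'v form" | Neg "'v form"

text \<open>Derivability in NOM. A sequent is a pair (antecedent list, succedent);
  the antecedent "Gamma, phi" is Gamma @ [phi].\<close>
inductive NOM :: "'v form list \<Rightarrow> 'v form \<Rightarrow> bool" where
  assumption: "NOM (\<Gamma> @ [\<phi>]) \<phi>"
| cut: "NOM \<Gamma> \<phi> \<Longrightarrow> NOM (\<Gamma> @ [\<phi>]) \<psi> \<Longrightarrow> NOM \<Gamma> \<psi>"
| paste: "NOM \<Gamma> \<phi> \<Longrightarrow> NOM \<Gamma> \<psi> \<Longrightarrow> NOM (\<Gamma> @ [\<phi>]) \<psi>"
| compat_exchange: "NOM (\<Gamma> @ [\<phi>, \<psi>]) \<phi> \<Longrightarrow> NOM (\<Gamma> @ [\<phi>, \<psi>]) \<chi> \<Longrightarrow>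
     NOM (\<Gamma> @ [\<psi>, \<phi>]) \<psi> \<Longrightarrow> NOM (\<Gamma> @ [\<psi>, \<phi>]) \<chi>"
| and_intro: "NOM \<Gamma> \<phi> \<Longrightarrow> NOM \<Gamma> \<psi> \<Longrightarrow> NOM \<Gamma> (And \<phi> \<psi>)"
| and_elim1: "NOM \<Gamma> (And \<phi> \<psi>) \<Longrightarrow> NOM \<Gamma> \<phi>"
| and_elim2: "NOM \<Gamma> (And \<phi> \<psi>) \<Longrightarrow> NOM \<Gamma> \<psi>"
| imp_intro: "NOM (\<Gamma> @ [\<phi>]) \<psi> \<Longrightarrow> NOM \<Gamma> (Imp \<phi> \<psi>)"
| imp_elim: "NOM \<Gamma> (Imp \<phi> \<psi>) \<Longrightarrow> NOM (\<Gamma> @ [\<phi>]) \<psi>"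
| excluded_middle: "NOM (\<Gamma> @ [\<phi>]) \<psi> \<Longrightarrow> NOM (\<Gamma> @ [Neg \<phi>]) \<psi> \<Longrightarrow> NOM \<Gamma> \<psi>"
| explosion: "NOM \<Gamma> (Neg \<phi>) \<Longrightarrow> NOM (\<Gamma> @ [\<phi>]) \<psi>"

definition oml :: "'a set \<Rightarrow> ('a \<Rightarrow> 'a \<Rightarrow> bool) \<Rightarrow> ('a \<Rightarrow> 'a \<Rightarrow> 'a) \<Rightarrow> ('a \<Rightarrow> 'a \<Rightarrow> 'a)
    \<Rightarrow> ('a \<Rightarrow> 'a) \<Rightarrow> 'a \<Rightarrow> 'a \<Rightarrow> bool" where
  "oml Q le mt jn ng bt tp \<longleftrightarrow>
     (\<forall>a\<in>Q. le a a) \<and>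
     (\<forall>a\<in>Q. \<forall>b\<in>Q. le a b \<and> le b a \<longrightarrow> a = b) \<and>
     (\<forall>a\<in>Q. \<forall>b\<in>Q. \<forall>c\<in>Q. le a b \<and> le b c \<longrightarrow> le a c) \<and>
     (\<forall>a\<in>Q. \<forall>b\<in>Q. mt a b \<in> Q \<and> le (mt a b) a \<and> le (mt a b) b \<and>
        (\<forall>c\<in>Q. le c a \<and> le c b \<longrightarrow> le c (mt a b))) \<and>
     (\<forall>a\<in>Q. \<forall>b\<in>Q. jn a b \<in> Q \<and> le a (jn a b) \<and> le b (jn a b) \<and>
        (\<forall>c\<in>Q. le a c \<and> le b c \<longrightarrow> le (jn a b) c)) \<and>
     bt \<in> Q \<and> tp \<in> Q \<and> (\<forall>a\<in>Q. le bt a \<and> le a tp) \<and>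
     (\<forall>a\<in>Q. ng a \<in> Q \<and> ng (ng a) = a) \<and>
     (\<forall>a\<in>Q. \<forall>b\<in>Q. le a b \<longrightarrow> le (ng b) (ng a)) \<and>
     (\<forall>a\<in>Q. mt a (ng a) = bt \<and> jn a (ng a) = tp) \<and>
     (\<forall>a\<in>Q. \<forall>b\<in>Q. le a b \<longrightarrow> jn a (mt (ng a) b) = b)"

definition sasaki_and :: "('a \<Rightarrow> 'a \<Rightarrow> 'a) \<Rightarrow> ('a \<Rightarrow> 'a \<Rightarrow> 'a) \<Rightarrow> ('a \<Rightarrow> 'a) \<Rightarrow> 'a \<Rightarrow> 'a \<Rightarrow> 'a" where
  "sasaki_and mt jn ng a b = mt (jn a (ng b)) b"

definition sasaki_imp :: "('a \<Rightarrow> 'a \<Rightarrow> 'a) \<Rightarrow> ('a \<Rightarrow> 'a \<Rightarrow> 'a) \<Rightarrow> ('a \<Rightarrow> 'a) \<Rightarrow> 'a \<Rightarrow> 'a \<Rightarrow> 'a" where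
  "sasaki_imp mt jn ng a b = jn (ng a) (mt a b)"

fun amps :: "('a \<Rightarrow> 'a \<Rightarrow> 'a) \<Rightarrow> ('a \<Rightarrow> 'a \<Rightarrow> 'a) \<Rightarrow> ('a \<Rightarrow> 'a) \<Rightarrow> 'a \<Rightarrow> 'a list \<Rightarrow> 'a" where
  "amps mt jn ng tp [] = tp"
| "amps mt jn ng tp (a # as) = foldl (sasaki_and mt jn ng) a as"

definition valuation :: "'a set \<Rightarrow> ('a \<Rightarrow> 'a \<Rightarrow> 'a) \<Rightarrow> ('a \<Rightarrow> 'a \<Rightarrow> 'a) \<Rightarrow> ('a \<Rightarrow> 'a)
    \<Rightarrow> ('v form \<Rightarrow> 'a) \<Rightarrow> bool" where
  "valuation Q mt jn ng v \<longleftrightarrow>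
     (\<forall>\<phi>. v \<phi> \<in> Q) \<and>
     (\<forall>\<phi> \<psi>. v (And \<phi> \<psi>) = mt (v \<phi>) (v \<psi>)) \<and>
     (\<forall>\<phi> \<psi>. v (Imp \<phi> \<psi>) = sasaki_imp mt jn ng (v \<phi>) (v \<psi>)) \<and>
     (\<forall>\<phi>. v (Neg \<phi>) = ng (v \<phi>))"

end

theory Submission
  imports Defs
begin

text \<open>
  Interderivability of single formulas, \<open>[\<phi>] \<turnstile> \<psi>\<close> and \<open>[\<psi>] \<turnstile> \<phi>\<close>, is a congruence for the
  connectives, and its classes form an orthomodular lattice (the Lindenbaum-Tarski algebra):
  \<open>\<wedge>\<close> is the meet, \<open>\<not>\<close> the orthocomplement and the De Morgan disjunction the join. In it the
  class of \<open>\<phi> \<rightarrow> \<psi>\<close> is the Sasaki implication of the classes, so the class map is a valuation,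
  and the hypothesis specialised to it says that the Sasaki product \<open>\<phi>\<^sub>1 & \<dots> & \<phi>\<^sub>n\<close>, read as a
  formula, entails \<open>\<psi>\<^sub>0\<close>. Finally \<open>\<phi>, \<psi> \<turnstile> (\<phi> \<or> \<not>\<psi>) \<wedge> \<psi>\<close>, so the antecedent
  \<open>\<phi>\<^sub>1, \<dots>, \<phi>\<^sub>n\<close> derives the Sasaki product, and \<open>\<phi>\<^sub>1, \<dots>, \<phi>\<^sub>n \<turnstile> \<psi>\<^sub>0\<close> follows.
\<close>

lemma NOM_weaken_left: "NOM \<Gamma> \<psi> \<Longrightarrow> NOM (\<Delta> @ \<Gamma>) \<psi>"
  by (induction rule: NOM.induct)
    ((simp only: append_assoc[symmetric])?, blast intro: NOM.intros)+

lemma NOM_refl: "NOM [\<phi>] \<phi>"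
  using NOM.assumption[of "[]"] by simp

lemma NOM_last: "NOM [\<phi>, \<psi>] \<psi>"
  using NOM.assumption[of "[\<phi>]"] by simp

lemma NOM_of_theorem: "NOM [] \<psi> \<Longrightarrow> NOM \<Gamma> \<psi>"
  using NOM_weaken_left[of "[]"] by simp

lemma NOM_trans:
  assumes "NOM \<Gamma> \<phi>" and "NOM [\<phi>] \<psi>"
  shows "NOM \<Gamma> \<psi>"
proof -
  have "NOM [] (Imp \<phi> \<psi>)"
    using NOM.imp_intro[of "[]"] assms(2) by simp
  then have "NOM (\<Gamma> @ [\<phi>]) \<psi>"
    by (rule NOM.imp_elim[OF NOM_of_theorem])
  with assms(1) show ?thesis
    by (rule NOM.cut)
qed

lemma NOM_trans_first:
  assumes "NOM [\<phi>] \<phi>'" and "NOM [\<phi>', \<psi>] \<chi>"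
  shows "NOM [\<phi>, \<psi>] \<chi>"
proof -
  have "NOM [\<phi>'] (Imp \<psi> \<chi>)"
    using NOM.imp_intro[of "[\<phi>']"] assms(2) by simp
  then have "NOM [\<phi>] (Imp \<psi> \<chi>)"
    by (rule NOM_trans[OF assms(1)])
  then show ?thesis
    using NOM.imp_elim[of "[\<phi>]"] by simp
qed

lemma NOM_contradiction: "NOM \<Gamma> \<phi> \<Longrightarrow> NOM \<Gamma> (Neg \<phi>) \<Longrightarrow> NOM \<Gamma> \<chi>"
  by (meson NOM.cut NOM.explosion)

lemma NOM_AndD1: "NOM [And \<phi> \<psi>] \<phi>"
  using NOM.and_elim1[OF NOM_refl] .

lemma NOM_AndD2: "NOM [And \<phi> \<psi>] \<psi>"
  using NOM.and_elim2[OF NOM_refl] .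

lemma NOM_Neg_Neg_elim: "NOM [Neg (Neg \<phi>)] \<phi>"
proof (rule NOM.excluded_middle[of _ \<phi>])
  show "NOM ([Neg (Neg \<phi>)] @ [\<phi>]) \<phi>"
    by (rule NOM.assumption)
  show "NOM ([Neg (Neg \<phi>)] @ [Neg \<phi>]) \<phi>"
    by (rule NOM.explosion) (rule NOM_refl)
qed

lemma NOM_Neg_Neg_intro: "NOM [\<phi>] (Neg (Neg \<phi>))"
proof -
  have "NOM ([] @ [Neg (Neg \<phi>)]) (Imp \<phi> (Neg (Neg \<phi>)))"
    using NOM.imp_intro[OF NOM.paste[OF NOM_Neg_Neg_elim NOM_refl]] by simp
  moreover have "NOM ([] @ [Neg \<phi>]) (Imp \<phi> (Neg (Neg \<phi>)))"
    using NOM.imp_intro[OF NOM.explosion[OF NOM_refl[of "Neg \<phi>"]]] by simp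
  ultimately have "NOM [] (Imp \<phi> (Neg (Neg \<phi>)))"
    by (rule NOM.excluded_middle[rotated])
  then show ?thesis
    using NOM.imp_elim[of "[]"] by simp
qed

lemma NOM_Neg_NegI: "NOM \<Gamma> \<phi> \<Longrightarrow> NOM \<Gamma> (Neg (Neg \<phi>))"
  using NOM_trans NOM_Neg_Neg_intro by blast

lemma NOM_explosion_pair: "NOM [\<phi>, Neg \<phi>] \<chi>"
  using NOM.explosion[OF NOM_Neg_Neg_intro[of \<phi>]] by simp

text \<open>
  On the branch \<open>\<not>\<phi>\<close> of excluded middle, compatible exchange moves \<open>\<not>\<phi>\<close> in front of \<open>\<psi>\<close>,
  where it contradicts \<open>\<phi>\<close>.
\<close>
lemma NOM_orthogonal_explosion:
  assumes "NOM [\<psi>] (Neg \<phi>)"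
  shows "NOM [\<phi>, \<psi>] \<chi>"
proof (rule NOM.excluded_middle[of _ "Neg \<phi>"])
  have \<phi>\<psi>: "NOM [\<phi>, \<psi>] (Neg \<phi>)"
    using NOM_weaken_left[OF assms, of "[\<phi>]"] by simp
  have explosive: "NOM ([\<phi>] @ [Neg \<phi>, \<psi>]) \<theta>" for \<theta>
    using NOM.imp_elim[OF NOM_explosion_pair[of \<phi> "Imp \<psi> \<theta>"]] by simp
  have "NOM ([\<phi>] @ [\<psi>, Neg \<phi>]) \<psi>"
    using NOM.paste[OF \<phi>\<psi> NOM.assumption[of "[\<phi>]" \<psi>, simplified]] by simp
  then have "NOM ([\<phi>] @ [\<psi>, Neg \<phi>]) \<chi>"
    by (rule NOM.compat_exchange[OF explosive explosive])
  then show "NOM ([\<phi>, \<psi>] @ [Neg \<phi>]) \<chi>"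
    by simp
  show "NOM ([\<phi>, \<psi>] @ [Neg (Neg \<phi>)]) \<chi>"
    by (rule NOM.explosion) (rule NOM_Neg_NegI[OF \<phi>\<psi>])
qed

lemma NOM_contrapos:
  assumes "NOM [\<phi>] \<psi>"
  shows "NOM [Neg \<psi>] (Neg \<phi>)"
proof (rule NOM.excluded_middle[of _ \<phi>])
  show "NOM ([Neg \<psi>] @ [\<phi>]) (Neg \<phi>)"
    using NOM_orthogonal_explosion[OF NOM_Neg_NegI[OF assms]] by simp
  show "NOM ([Neg \<psi>] @ [Neg \<phi>]) (Neg \<phi>)"
    by (rule NOM.assumption)
qed

lemma NOM_keep_after_paste:
  assumes "NOM [Neg \<phi>] \<psi>"
  shows "NOM [\<phi>, \<psi>] \<phi>"
proof (rule NOM.excluded_middle[of _ \<phi>])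
  show "NOM ([\<phi>, \<psi>] @ [\<phi>]) \<phi>"
    by (rule NOM.assumption)
  have explosive: "NOM ([\<phi>] @ [Neg \<phi>, \<psi>]) \<theta>" for \<theta>
    using NOM.imp_elim[OF NOM_explosion_pair[of \<phi> "Imp \<psi> \<theta>"]] by simp
  have "NOM [\<phi>, \<psi>, Neg \<phi>] \<psi>"
    using NOM_weaken_left[OF assms, of "[\<phi>, \<psi>]"] by simp
  then have "NOM ([\<phi>] @ [\<psi>, Neg \<phi>]) \<phi>"
    using NOM.compat_exchange[OF explosive explosive] by simp
  then show "NOM ([\<phi>, \<psi>] @ [Neg \<phi>]) \<phi>"
    by simp
qed

lemma NOM_NegI:
  assumes "\<And>\<chi>. NOM [\<phi>] \<chi>"
  shows "NOM [] (Neg \<phi>)"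
  using NOM.excluded_middle[of "[]" \<phi> "Neg \<phi>"] assms NOM.assumption[of "[]" "Neg \<phi>"] by simp

text \<open>Any theorem of NOM can serve as the top formula.\<close>
definition Top :: "'v form" where
  "Top = Imp (Var undefined) (Var undefined)"

lemma NOM_Top: "NOM \<Gamma> Top"
  unfolding Top_def using NOM.imp_intro[of "[]"] NOM_refl NOM_of_theorem by fastforce

lemma NOM_Neg_Top: "NOM [Neg Top] \<phi>"
  using NOM.explosion[OF NOM_Neg_NegI[OF NOM_Top], of "[]"] by simp

lemma NOM_And_Neg: "NOM [And \<phi> (Neg \<phi>)] \<chi>"
  by (rule NOM_contradiction[OF NOM_AndD1 NOM_AndD2])

subsection \<open>Disjunction and the Sasaki operations\<close>

definition Or :: "'v form \<Rightarrow> 'v form \<Rightarrow> 'v form" where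
  "Or \<phi> \<psi> = Neg (And (Neg \<phi>) (Neg \<psi>))"

lemma NOM_OrI1: "NOM [\<phi>] (Or \<phi> \<psi>)"
  unfolding Or_def using NOM_trans[OF NOM_Neg_Neg_intro NOM_contrapos[OF NOM_AndD1]] .

lemma NOM_OrI2: "NOM [\<psi>] (Or \<phi> \<psi>)"
  unfolding Or_def using NOM_trans[OF NOM_Neg_Neg_intro NOM_contrapos[OF NOM_AndD2]] .

lemma NOM_OrE:
  assumes "NOM [\<phi>] \<chi>" and "NOM [\<psi>] \<chi>"
  shows "NOM [Or \<phi> \<psi>] \<chi>"
proof -
  have "NOM [Neg \<chi>] (And (Neg \<phi>) (Neg \<psi>))"
    using NOM.and_intro[OF NOM_contrapos[OF assms(1)] NOM_contrapos[OF assms(2)]] .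
  then show ?thesis
    unfolding Or_def using NOM_trans[OF NOM_contrapos NOM_Neg_Neg_elim] by blast
qed

lemma NOM_Or_Neg: "NOM \<Gamma> (Or \<phi> (Neg \<phi>))"
  unfolding Or_def by (rule NOM_of_theorem, rule NOM_NegI, rule NOM_And_Neg)

lemma NOM_Imp_sasaki: "NOM [Imp \<phi> \<psi>] (Or (Neg \<phi>) (And \<phi> \<psi>))"
proof (rule NOM.excluded_middle[of _ \<phi>])
  have "NOM [Imp \<phi> \<psi>, \<phi>] \<psi>"
    using NOM.imp_elim[OF NOM_refl[of "Imp \<phi> \<psi>"]] by simp
  then show "NOM ([Imp \<phi> \<psi>] @ [\<phi>]) (Or (Neg \<phi>) (And \<phi> \<psi>))"
    using NOM_trans[OF NOM.and_intro[OF NOM_last] NOM_OrI2] by simp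
  show "NOM ([Imp \<phi> \<psi>] @ [Neg \<phi>]) (Or (Neg \<phi>) (And \<phi> \<psi>))"
    using NOM_trans[OF NOM_last NOM_OrI1] by simp
qed

lemma NOM_sasaki_Imp: "NOM [Or (Neg \<phi>) (And \<phi> \<psi>)] (Imp \<phi> \<psi>)"
proof (rule NOM_OrE)
  show "NOM [Neg \<phi>] (Imp \<phi> \<psi>)"
    by (rule NOM.imp_intro[OF NOM.explosion[OF NOM_refl]])
  show "NOM [And \<phi> \<psi>] (Imp \<phi> \<psi>)"
    by (rule NOM.imp_intro[OF NOM.paste[OF NOM_AndD1 NOM_AndD2]])
qed

lemma NOM_orthomodular:
  assumes "NOM [\<phi>] \<psi>"
  shows "NOM [\<psi>] (Or \<phi> (And (Neg \<phi>) \<psi>))"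
proof (rule NOM.excluded_middle[of _ \<phi>])
  show "NOM ([\<psi>] @ [\<phi>]) (Or \<phi> (And (Neg \<phi>) \<psi>))"
    using NOM_trans[OF NOM_last NOM_OrI1] by simp
  have "NOM [\<psi>, Neg \<phi>] \<psi>"
    by (rule NOM_keep_after_paste) (rule NOM_contrapos[OF assms])
  then show "NOM ([\<psi>] @ [Neg \<phi>]) (Or \<phi> (And (Neg \<phi>) \<psi>))"
    using NOM_trans[OF NOM.and_intro[OF NOM_last] NOM_OrI2] by simp
qed

definition Sand :: "'v form \<Rightarrow> 'v form \<Rightarrow> 'v form" where
  "Sand \<phi> \<psi> = And (Or \<phi> (Neg \<psi>)) \<psi>"

fun Sands :: "'v form list \<Rightarrow> 'v form" where
  "Sands [] = Top"
| "Sands (\<phi> # \<phi>s) = foldl Sand \<phi> \<phi>s"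

lemma NOM_Sand: "NOM [\<phi>, \<psi>] (Sand \<phi> \<psi>)"
proof -
  let ?\<delta> = "Or \<phi> (Neg \<psi>)"
  have "NOM [Neg ?\<delta>] \<psi>"
    using NOM_trans[OF NOM_contrapos[OF NOM_OrI2] NOM_Neg_Neg_elim] .
  then have "NOM [?\<delta>, \<psi>] ?\<delta>"
    by (rule NOM_keep_after_paste)
  then have "NOM [\<phi>, \<psi>] ?\<delta>"
    by (rule NOM_trans_first[OF NOM_OrI1])
  then show ?thesis
    unfolding Sand_def using NOM.and_intro NOM_last by blast
qed

lemma NOM_foldl_Sand:
  assumes "NOM [foldl Sand \<phi> \<phi>s] \<chi>"
  shows "NOM (\<phi> # \<phi>s) \<chi>"
  using assms
proof (induction \<phi>s arbitrary: \<chi> rule: rev_induct)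
  case Nil
  then show ?case by simp
next
  case (snoc \<psi> \<phi>s)
  have "NOM [foldl Sand \<phi> \<phi>s, \<psi>] \<chi>"
    using NOM_trans[OF NOM_Sand] snoc.prems by simp
  then have "NOM [foldl Sand \<phi> \<phi>s] (Imp \<psi> \<chi>)"
    using NOM.imp_intro[of "[_]"] by simp
  then have "NOM (\<phi> # \<phi>s) (Imp \<psi> \<chi>)"
    by (rule snoc.IH)
  then show ?case
    using NOM.imp_elim[of "\<phi> # \<phi>s"] by simp
qed

lemma NOM_of_Sands: "NOM [Sands \<Gamma>] \<chi> \<Longrightarrow> NOM \<Gamma> \<chi>"
  by (cases \<Gamma>) (auto intro: NOM_trans[OF NOM_Top] NOM_foldl_Sand)

subsection \<open>The Lindenbaum-Tarski algebra\<close>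

text \<open>
  The hypothesis quantifies over lattices with carrier type \<open>'v form set set\<close>, so the algebra is
  built from explicit equivalence classes rather than as a quotient type.
\<close>
definition prov_equiv :: "'v form \<Rightarrow> 'v form \<Rightarrow> bool" where
  "prov_equiv \<phi> \<psi> \<longleftrightarrow> NOM [\<phi>] \<psi> \<and> NOM [\<psi>] \<phi>"

definition lt_class :: "'v form \<Rightarrow> 'v form set" where
  "lt_class \<phi> = {\<psi>. prov_equiv \<phi> \<psi>}"

definition lt_rep :: "'v form set \<Rightarrow> 'v form" where
  "lt_rep A = (SOME \<phi>. \<phi> \<in> A)"

lemma prov_equiv_lt_rep: "prov_equiv \<phi> (lt_rep (lt_class \<phi>))"
proof -
  have "\<phi> \<in> lt_class \<phi>"
    unfolding lt_class_def prov_equiv_def using NOM_refl by simp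
  then have "lt_rep (lt_class \<phi>) \<in> lt_class \<phi>"
    unfolding lt_rep_def by (rule someI)
  then show ?thesis
    unfolding lt_class_def by simp
qed

lemma lt_class_eq_iff: "lt_class \<phi> = lt_class \<psi> \<longleftrightarrow> prov_equiv \<phi> \<psi>"
proof
  assume "lt_class \<phi> = lt_class \<psi>"
  then have "\<psi> \<in> lt_class \<phi>"
    unfolding lt_class_def prov_equiv_def using NOM_refl by auto
  then show "prov_equiv \<phi> \<psi>"
    unfolding lt_class_def by simp
next
  assume "prov_equiv \<phi> \<psi>"
  then show "lt_class \<phi> = lt_class \<psi>"
    unfolding lt_class_def prov_equiv_def using NOM_trans by blast
qed

definition lt_le :: "'v form set \<Rightarrow> 'v form set \<Rightarrow> bool" where
  "lt_le A B \<longleftrightarrow> NOM [lt_rep A] (lt_rep B)"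

definition lt_meet :: "'v form set \<Rightarrow> 'v form set \<Rightarrow> 'v form set" where
  "lt_meet A B = lt_class (And (lt_rep A) (lt_rep B))"

definition lt_join :: "'v form set \<Rightarrow> 'v form set \<Rightarrow> 'v form set" where
  "lt_join A B = lt_class (Or (lt_rep A) (lt_rep B))"

definition lt_neg :: "'v form set \<Rightarrow> 'v form set" where
  "lt_neg A = lt_class (Neg (lt_rep A))"

lemma lt_le_lt_class: "lt_le (lt_class \<phi>) (lt_class \<psi>) \<longleftrightarrow> NOM [\<phi>] \<psi>"
  using prov_equiv_lt_rep[of \<phi>] prov_equiv_lt_rep[of \<psi>]
  unfolding lt_le_def prov_equiv_def using NOM_trans by blast

lemma NOM_And_mono: "NOM [\<phi>] \<phi>' \<Longrightarrow> NOM [\<psi>] \<psi>' \<Longrightarrow> NOM [And \<phi> \<psi>] (And \<phi>' \<psi>')"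
  by (meson NOM.and_intro NOM_AndD1 NOM_AndD2 NOM_trans)

lemma NOM_Or_mono: "NOM [\<phi>] \<phi>' \<Longrightarrow> NOM [\<psi>] \<psi>' \<Longrightarrow> NOM [Or \<phi> \<psi>] (Or \<phi>' \<psi>')"
  by (meson NOM_OrE NOM_OrI1 NOM_OrI2 NOM_trans)

lemma lt_meet_lt_class: "lt_meet (lt_class \<phi>) (lt_class \<psi>) = lt_class (And \<phi> \<psi>)"
  using prov_equiv_lt_rep[of \<phi>] prov_equiv_lt_rep[of \<psi>]
  unfolding lt_meet_def lt_class_eq_iff prov_equiv_def by (meson NOM_And_mono)

lemma lt_join_lt_class: "lt_join (lt_class \<phi>) (lt_class \<psi>) = lt_class (Or \<phi> \<psi>)"
  using prov_equiv_lt_rep[of \<phi>] prov_equiv_lt_rep[of \<psi>]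
  unfolding lt_join_def lt_class_eq_iff prov_equiv_def by (meson NOM_Or_mono)

lemma lt_neg_lt_class: "lt_neg (lt_class \<phi>) = lt_class (Neg \<phi>)"
  using prov_equiv_lt_rep[of \<phi>]
  unfolding lt_neg_def lt_class_eq_iff prov_equiv_def by (meson NOM_contrapos)

lemma amps_lt_class:
  "amps lt_meet lt_join lt_neg (lt_class Top) (map lt_class \<Gamma>) = lt_class (Sands \<Gamma>)"
proof -
  have "foldl (sasaki_and lt_meet lt_join lt_neg) (lt_class \<phi>) (map lt_class \<phi>s)
      = lt_class (foldl Sand \<phi> \<phi>s)" for \<phi> \<phi>s
    by (induction \<phi>s arbitrary: \<phi>)
      (simp_all add: sasaki_and_def Sand_def lt_meet_lt_class lt_join_lt_class lt_neg_lt_class)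
  then show ?thesis
    by (cases \<Gamma>) simp_all
qed

lemma oml_lindenbaum:
  "oml (range lt_class) lt_le lt_meet lt_join lt_neg (lt_class (Neg Top)) (lt_class Top)"
proof -
  let ?Q = "range lt_class"
  have reflexive: "\<forall>a\<in>?Q. lt_le a a"
    by (auto simp add: lt_le_lt_class NOM_refl)
  have antisymmetric: "\<forall>a\<in>?Q. \<forall>b\<in>?Q. lt_le a b \<and> lt_le b a \<longrightarrow> a = b"
    by (auto simp add: lt_le_lt_class lt_class_eq_iff prov_equiv_def)
  have transitive: "\<forall>a\<in>?Q. \<forall>b\<in>?Q. \<forall>c\<in>?Q. lt_le a b \<and> lt_le b c \<longrightarrow> lt_le a c"
    by (auto simp add: lt_le_lt_class elim: NOM_trans)
  have meet: "\<forall>a\<in>?Q. \<forall>b\<in>?Q. lt_meet a b \<in> ?Q \<and> lt_le (lt_meet a b) a \<and> lt_le (lt_meet a b) b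
      \<and> (\<forall>c\<in>?Q. lt_le c a \<and> lt_le c b \<longrightarrow> lt_le c (lt_meet a b))"
    by (auto simp add: lt_meet_lt_class lt_le_lt_class NOM_AndD1 NOM_AndD2 intro: NOM.and_intro)
  have join: "\<forall>a\<in>?Q. \<forall>b\<in>?Q. lt_join a b \<in> ?Q \<and> lt_le a (lt_join a b) \<and> lt_le b (lt_join a b)
      \<and> (\<forall>c\<in>?Q. lt_le a c \<and> lt_le b c \<longrightarrow> lt_le (lt_join a b) c)"
    by (auto simp add: lt_join_lt_class lt_le_lt_class NOM_OrI1 NOM_OrI2 intro: NOM_OrE)
  have bounds: "lt_class (Neg Top) \<in> ?Q \<and> lt_class Top \<in> ?Q
      \<and> (\<forall>a\<in>?Q. lt_le (lt_class (Neg Top)) a \<and> lt_le a (lt_class Top))"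
    by (auto simp add: lt_le_lt_class NOM_Neg_Top NOM_Top)
  have involution: "\<forall>a\<in>?Q. lt_neg a \<in> ?Q \<and> lt_neg (lt_neg a) = a"
    by (auto simp add: lt_neg_lt_class lt_class_eq_iff prov_equiv_def
        NOM_Neg_Neg_elim NOM_Neg_Neg_intro)
  have antitone: "\<forall>a\<in>?Q. \<forall>b\<in>?Q. lt_le a b \<longrightarrow> lt_le (lt_neg b) (lt_neg a)"
    by (auto simp add: lt_neg_lt_class lt_le_lt_class NOM_contrapos)
  have complement: "\<forall>a\<in>?Q. lt_meet a (lt_neg a) = lt_class (Neg Top)
      \<and> lt_join a (lt_neg a) = lt_class Top"
    by (auto simp add: lt_neg_lt_class lt_meet_lt_class lt_join_lt_class lt_class_eq_iff
        prov_equiv_def NOM_And_Neg NOM_Neg_Top NOM_Or_Neg NOM_Top)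
  have orthomodular: "\<forall>a\<in>?Q. \<forall>b\<in>?Q. lt_le a b \<longrightarrow> lt_join a (lt_meet (lt_neg a) b) = b"
    by (auto simp add: lt_neg_lt_class lt_join_lt_class lt_meet_lt_class lt_le_lt_class
        lt_class_eq_iff prov_equiv_def NOM_orthomodular NOM_AndD2 intro: NOM_OrE)
  show ?thesis
    unfolding oml_def
    using reflexive antisymmetric transitive meet join bounds involution antitone complement
      orthomodular
    by blast
qed

lemma valuation_lt_class: "valuation (range lt_class) lt_meet lt_join lt_neg lt_class"
  unfolding valuation_def sasaki_imp_def
  by (auto simp add: lt_meet_lt_class lt_join_lt_class lt_neg_lt_class lt_class_eq_iff
      prov_equiv_def NOM_Imp_sasaki NOM_sasaki_Imp)

theorem corollary3p9:
  fixes \<Gamma> :: "'v form list" and \<psi>\<^sub>0 :: "'v form"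
  assumes "\<forall>(Q :: 'v form set set) le mt jn ng bt tp (v :: 'v form \<Rightarrow> 'v form set).
             oml Q le mt jn ng bt tp \<and> valuation Q mt jn ng v \<longrightarrow>
             le (amps mt jn ng tp (map v \<Gamma>)) (v \<psi>\<^sub>0)"
  shows "NOM \<Gamma> \<psi>\<^sub>0"
proof -
  have "lt_le (amps lt_meet lt_join lt_neg (lt_class Top) (map lt_class \<Gamma>)) (lt_class \<psi>\<^sub>0)"
    using assms oml_lindenbaum valuation_lt_class by blast
  then have "NOM [Sands \<Gamma>] \<psi>\<^sub>0"
    by (simp add: amps_lt_class lt_le_lt_class)
  then show ?thesis
    by (rule NOM_of_Sands)
qed

end
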